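(* Let $n\geq 4$ be an integer and let $x_{1},\dots,x_{n}\in \mathbb{R}$ satisfy $\sum_{i=1}^{n}x_{i}=0$ and $\sum_{i=1}^{n}x_{i}^{2}=1$. Set $x_{0}=x_{n}$. Then $$\sum_{i=1}^{n}x_{i}x_{i-1}< \frac{3n^{2}-4\pi^{2}}{3n^{2}+2\pi^{2}}.$$ *)

theory Defs
  imports Complex_Main
begin

end

theory Submission imports Defs begin

text \<open>Let \<open>P k = |\<Sum>\<^sub>j x\<^sub>j w\<^sup>j\<^sup>k|\<^sup>2\<close> with \<open>w = exp (2 pi i / n)\<close> be the power spectrum of \<open>x\<close>.
  Orthogonality of the \<open>n\<close>-th roots of unity gives \<open>\<Sum>\<^sub>k P k = n \<Sum>\<^sub>i x\<^sub>i\<^sup>2\<close> and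
  \<open>\<Sum>\<^sub>k P k cos (2 pi k / n) = n \<Sum>\<^sub>i x\<^sub>i x\<^sub>i\<^sub>-\<^sub>1\<close>, and the mean-zero condition kills \<open>P 0\<close>.
  As \<open>cos (2 pi k / n) \<le> cos (2 pi / n)\<close> for \<open>0 < k < n\<close>, the cyclic sum is at most
  \<open>cos (2 pi / n)\<close>; the fourth-order Taylor bound for the cosine then gives the rational bound.\<close>

definition cyc_pred :: "nat \<Rightarrow> nat \<Rightarrow> nat" where
  "cyc_pred n i = (if i = 1 then n else i - 1)"

text \<open>\<open>dft_power n x k\<close> is \<open>P k\<close> written in real form.\<close>

definition dft_power :: "nat \<Rightarrow> (nat \<Rightarrow> real) \<Rightarrow> nat \<Rightarrow> real" where
  "dft_power n x k =
     (\<Sum>i=1..n. \<Sum>j=1..n. x i * x j * cos (2 * pi * real k * (real i - real j) / n))"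

lemma cos_le_taylor_4:
  fixes x :: real
  assumes "\<bar>x\<bar> \<le> pi / 2"
  shows "cos x \<le> 1 - x^2 / 2 + x^4 / 24"
proof -
  obtain t where t: "\<bar>t\<bar> \<le> \<bar>x\<bar>"
    and expansion: "cos x = (\<Sum>m<6. cos_coeff m * x ^ m) + (cos (t + 1/2 * real 6 * pi) / fact 6) * x ^ 6"
    using Maclaurin_cos_expansion by blast
  have "cos (t + 1/2 * real 6 * pi) = - cos t"
    by (simp add: cos_add)
  moreover have "cos t \<ge> 0"
    using t assms by (intro cos_ge_zero) auto
  moreover have "(\<Sum>m<6. cos_coeff m * x ^ m) = 1 - x^2 / 2 + x^4 / 24"
    by (simp add: numeral_eq_Suc cos_coeff_Suc sin_coeff_Suc field_simps)
  ultimately show ?thesis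
    using expansion by (simp add: zero_le_even_power)
qed

lemma sum_cos_roots_of_unity:
  fixes d :: int
  assumes "n > 0"
  shows "(\<Sum>k<n. cos (2 * pi * real k * of_int d / n)) = (if int n dvd d then real n else 0)"
proof -
  let ?z = "cis (2 * pi * of_int d / n)"
  have "(\<Sum>k<n. cos (2 * pi * real k * of_int d / n)) = Re (\<Sum>k<n. ?z ^ k)"
    by (simp add: DeMoivre Re_sum mult.assoc mult.left_commute)
  also have "\<dots> = (if int n dvd d then real n else 0)"
  proof (cases "int n dvd d")
    case True
    then obtain m where "d = int n * m" by blast
    then have "2 * pi * of_int d / n = 2 * pi * of_int m"
      using assms by simp
    then have "?z = 1"
      by (metis cis_multiple_2pi Ints_of_int)
    then show ?thesis using True by simp
  next
    case False
    have "?z \<noteq> 1"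
    proof
      assume "?z = 1"
      then have "cos (2 * pi * of_int d / n) = 1"
        by (metis cis.sel(1) one_complex.sel(1))
      then obtain m :: int where "2 * pi * of_int d / n = of_int m * 2 * pi"
        unfolding cos_one_2pi_int by blast
      then have "of_int d = real n * of_int m"
        using assms by (simp add: field_simps)
      then have "d = int n * m"
        by (metis of_int_eq_iff of_int_mult of_int_of_nat_eq)
      with False show False by simp
    qed
    moreover have "?z ^ n = 1"
      using assms by (simp add: DeMoivre)
    ultimately have "(\<Sum>k<n. ?z ^ k) = 0"
      by (simp add: geometric_sum)
    then show ?thesis using False by simp
  qed
  finally show ?thesis .
qed

lemma cos_2pi_div_le_first:
  assumes "1 \<le> k" "k < n"
  shows "cos (2 * pi * real k / n) \<le> cos (2 * pi / n)"
proof (cases "2 * k \<le> n")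
  case True
  have "2 * pi * real k / n \<le> pi" "2 * pi / n \<le> 2 * pi * real k / n"
    using True assms by (simp_all add: field_simps)
  then show ?thesis
    using assms by (subst cos_mono_le_eq) auto
next
  case False
  have "pi * (real k + 1) \<le> pi * real n"
    using assms by (intro mult_left_mono) auto
  then have "2 * pi / n \<le> 2 * pi * real (n - k) / n"
    using assms by (simp add: field_simps of_nat_diff algebra_simps)
  moreover have "2 * pi * real (n - k) / n \<le> pi"
    using False assms by (simp add: field_simps of_nat_diff)
  ultimately have "cos (2 * pi * real (n - k) / n) \<le> cos (2 * pi / n)"
    using assms by (subst cos_mono_le_eq) auto
  moreover have "2 * pi * real k / n = 2 * pi - 2 * pi * real (n - k) / n"
    using assms by (simp add: field_simps of_nat_diff)
  ultimately show ?thesis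
    by (simp only: cos_2pi_minus)
qed

lemma int_dvd_small_cases:
  fixes d :: int
  assumes "int n dvd d" "- int n \<le> d" "d < int n"
  shows "d = 0 \<or> d = - int n"
proof -
  consider "d = 0" | "d > 0" | "d < 0" by linarith
  then show ?thesis
  proof cases
    case 2
    with assms(1) have "int n \<le> d" by (rule zdvd_imp_le)
    with assms(3) show ?thesis by simp
  next
    case 3
    with assms(1) have "int n \<le> - d" by (intro zdvd_imp_le) simp_all
    with assms(2) show ?thesis by simp
  qed simp
qed

lemma cyc_pred_in_range: "i \<in> {1..n} \<Longrightarrow> cyc_pred n i \<in> {1..n}"
  by (auto simp: cyc_pred_def)

lemma int_dvd_diff_iff_eq:
  assumes "i \<in> {1..n}" "j \<in> {1..n}"
  shows "int n dvd (int i - int j) \<longleftrightarrow> i = j"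
  using assms int_dvd_small_cases[of n "int i - int j"] by auto

lemma int_dvd_diff_iff_cyc_pred:
  assumes "i \<in> {1..n}" "j \<in> {1..n}"
  shows "int n dvd (int i - int j - 1) \<longleftrightarrow> j = cyc_pred n i"
  using assms int_dvd_small_cases[of n "int i - int j - 1"] by (auto simp: cyc_pred_def)

lemma sum_cyc_pred_delta:
  "(\<Sum>i=1..n. \<Sum>j=1..n. if j = cyc_pred n i then x i * x j else 0)
     = (\<Sum>i=1..n. x i * x (cyc_pred n i))"
proof (intro sum.cong refl)
  fix i assume "i \<in> {1..n}"
  then have "cyc_pred n i \<in> {1..n}" by (rule cyc_pred_in_range)
  then show "(\<Sum>j=1..n. if j = cyc_pred n i then x i * x j else 0) = x i * x (cyc_pred n i)"
    by (simp add: sum.delta)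
qed

lemma sum_sum_cos_diff_nonneg:
  fixes x a :: "'a \<Rightarrow> real"
  shows "0 \<le> (\<Sum>i\<in>I. \<Sum>j\<in>I. x i * x j * cos (a i - a j))"
proof -
  have "(\<Sum>i\<in>I. \<Sum>j\<in>I. x i * x j * cos (a i - a j))
      = (\<Sum>i\<in>I. x i * cos (a i))^2 + (\<Sum>i\<in>I. x i * sin (a i))^2"
    by (simp add: cos_diff power2_eq_square sum_product sum.distrib[symmetric] algebra_simps)
  then show ?thesis by simp
qed

lemma dft_power_nonneg: "0 \<le> dft_power n x k"
proof -
  define a where "a i = 2 * pi * real k * real i / n" for i
  have "dft_power n x k = (\<Sum>i=1..n. \<Sum>j=1..n. x i * x j * cos (a i - a j))"
    unfolding dft_power_def a_def by (simp add: right_diff_distrib diff_divide_distrib)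
  then show ?thesis
    using sum_sum_cos_diff_nonneg by simp
qed

lemma dft_power_0: "dft_power n x 0 = (\<Sum>i=1..n. x i)^2"
  by (simp add: dft_power_def power2_eq_square sum_product)

lemma sum_dft_power_weighted:
  "(\<Sum>k<m. dft_power n x k * w k)
     = (\<Sum>i=1..n. \<Sum>j=1..n. x i * x j *
          (\<Sum>k<m. cos (2 * pi * real k * (real i - real j) / n) * w k))"
  unfolding dft_power_def
  by (simp add: sum_distrib_left sum_distrib_right sum.swap[where A="{..<m}"] mult.assoc)

lemma sum_cos_index_diff:
  fixes e :: int
  assumes "n > 0"
  shows "(\<Sum>k<n. cos (2 * pi * real k * (real i - real j + of_int e) / n))
           = (if int n dvd (int i - int j + e) then real n else 0)"
  using sum_cos_roots_of_unity[OF assms, of "int i - int j + e"] by simp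

lemma sum_dft_power:
  assumes "n > 0"
  shows "(\<Sum>k<n. dft_power n x k) = real n * (\<Sum>i=1..n. (x i)^2)"
proof -
  have "(\<Sum>k<n. dft_power n x k) = (\<Sum>k<n. dft_power n x k * 1)" by simp
  also have "\<dots> = (\<Sum>i=1..n. \<Sum>j=1..n. if j = i then real n * (x i)^2 else 0)"
    unfolding sum_dft_power_weighted
  proof (intro sum.cong refl)
    fix i j assume "i \<in> {1..n}" "j \<in> {1..n}"
    then show "x i * x j * (\<Sum>k<n. cos (2 * pi * real k * (real i - real j) / n) * 1)
        = (if j = i then real n * (x i)^2 else 0)"
      using sum_cos_index_diff[OF assms, of i j 0] int_dvd_diff_iff_eq[of i n j]
      by (auto simp: power2_eq_square)
  qed
  also have "\<dots> = real n * (\<Sum>i=1..n. (x i)^2)"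
    by (simp add: sum_distrib_left)
  finally show ?thesis .
qed

lemma cos_mult_cos_shift:
  fixes a y m :: real
  shows "cos (a * y / m) * cos (a / m) = (cos (a * (y + 1) / m) + cos (a * (y - 1) / m)) / 2"
proof -
  have "a * (y + 1) / m = a * y / m + a / m" "a * (y - 1) / m = a * y / m - a / m"
    by (simp_all add: algebra_simps add_divide_distrib diff_divide_distrib)
  then show ?thesis
    by (simp add: cos_add cos_diff)
qed

lemma sum_cos_index_diff_mult_cos:
  assumes "n > 0" "i \<in> {1..n}" "j \<in> {1..n}"
  shows "(\<Sum>k<n. cos (2 * pi * real k * (real i - real j) / n) * cos (2 * pi * real k / n))
           = ((if i = cyc_pred n j then real n else 0) + (if j = cyc_pred n i then real n else 0)) / 2"
proof -
  have "(\<Sum>k<n. cos (2 * pi * real k * (real i - real j) / n) * cos (2 * pi * real k / n))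
      = ((\<Sum>k<n. cos (2 * pi * real k * (real i - real j + of_int 1) / n))
         + (\<Sum>k<n. cos (2 * pi * real k * (real i - real j + of_int (-1)) / n))) / 2"
    by (simp add: cos_mult_cos_shift sum.distrib flip: sum_divide_distrib)
  also have "\<dots> = ((if int n dvd (int i - int j + 1) then real n else 0)
         + (if int n dvd (int i - int j + (-1)) then real n else 0)) / 2"
    by (simp only: sum_cos_index_diff[OF assms(1)])
  also have "int i - int j + 1 = - (int j - int i - 1)"
    by simp
  finally show ?thesis
    using int_dvd_diff_iff_cyc_pred[OF assms(2,3)] int_dvd_diff_iff_cyc_pred[OF assms(3,2)]
    by (simp only: dvd_minus_iff) simp
qed

lemma sum_dft_power_cos:
  assumes "n > 0"
  shows "(\<Sum>k<n. dft_power n x k * cos (2 * pi * real k / n))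
           = real n * (\<Sum>i=1..n. x i * x (cyc_pred n i))"
proof -
  let ?C = "\<Sum>i=1..n. x i * x (cyc_pred n i)"
  have "(\<Sum>k<n. dft_power n x k * cos (2 * pi * real k / n))
      = (\<Sum>i=1..n. \<Sum>j=1..n. real n / 2 * (if j = cyc_pred n i then x i * x j else 0)
                             + real n / 2 * (if i = cyc_pred n j then x j * x i else 0))"
    unfolding sum_dft_power_weighted
  proof (intro sum.cong refl)
    fix i j assume "i \<in> {1..n}" "j \<in> {1..n}"
    show "x i * x j * (\<Sum>k<n. cos (2 * pi * real k * (real i - real j) / n) * cos (2 * pi * real k / n))
        = real n / 2 * (if j = cyc_pred n i then x i * x j else 0)
          + real n / 2 * (if i = cyc_pred n j then x j * x i else 0)"
      unfolding sum_cos_index_diff_mult_cos[OF assms \<open>i \<in> {1..n}\<close> \<open>j \<in> {1..n}\<close>]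
      by (simp add: field_simps)
  qed
  also have "\<dots> = real n / 2 * ?C + real n / 2 * ?C"
    unfolding sum.distrib
    by (simp only: sum.swap[of _ "{1..n}" "{1..n}"] sum_cyc_pred_delta flip: sum_distrib_left)
  finally show ?thesis by simp
qed

lemma cyclic_sum_le_cos:
  assumes "n > 0" and "(\<Sum>i=1..n. x i) = 0"
  shows "(\<Sum>i=1..n. x i * x (cyc_pred n i)) \<le> cos (2 * pi / n) * (\<Sum>i=1..n. (x i)^2)"
proof -
  have split0: "{..<n} = insert 0 {1..<n}" using assms(1) by auto
  have P0: "dft_power n x 0 = 0"
    using assms(2) by (simp add: dft_power_0)
  have "real n * (\<Sum>i=1..n. x i * x (cyc_pred n i))
      = (\<Sum>k\<in>{1..<n}. dft_power n x k * cos (2 * pi * real k / n))"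
    using sum_dft_power_cos[OF assms(1), of x] P0 by (simp add: split0)
  also have "\<dots> \<le> (\<Sum>k\<in>{1..<n}. dft_power n x k * cos (2 * pi / n))"
    by (intro sum_mono mult_left_mono cos_2pi_div_le_first dft_power_nonneg) auto
  also have "\<dots> = real n * (\<Sum>i=1..n. (x i)^2) * cos (2 * pi / n)"
    using sum_dft_power[OF assms(1), of x] P0 by (simp add: split0 flip: sum_distrib_right)
  finally show ?thesis
    using assms(1) by (simp add: mult.commute mult.left_commute)
qed

lemma taylor_4_lt_rational:
  fixes t :: real
  assumes "0 < t" "t^2 < 6"
  shows "1 - t^2 / 2 + t^4 / 24 < (6 - 2 * t^2) / (6 + t^2)"
proof -
  have "t^6 = t^4 * t^2" by (simp flip: power_add)
  then have "t^6 < t^4 * 6"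
    using assms by (metis mult_strict_left_mono zero_less_power)
  then have "(6 + t^2) * (1 - t^2 / 2 + t^4 / 24) < 6 - 2 * t^2"
    by (simp add: algebra_simps eval_nat_numeral)
  then show ?thesis
    by (simp add: pos_less_divide_eq add_pos_nonneg mult.commute)
qed

lemma bound_eq_rational:
  fixes t :: real
  assumes "n > 0" "t = 2 * pi / n"
  shows "(3 * real n ^ 2 - 4 * pi ^ 2) / (3 * real n ^ 2 + 2 * pi ^ 2) = (6 - 2 * t^2) / (6 + t^2)"
proof -
  have "t * real n = 2 * pi"
    using assms by simp
  then have "(t * real n)^2 = (2 * pi)^2"
    by simp
  then have "t^2 * (real n)^2 = 4 * pi^2"
    by (simp add: power_mult_distrib)
  then have "(3 * real n ^ 2 - 4 * pi ^ 2) * (6 + t^2) = (6 - 2 * t^2) * (3 * real n ^ 2 + 2 * pi ^ 2)"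
    by (simp add: algebra_simps)
  moreover have "3 * real n ^ 2 + 2 * pi ^ 2 > 0" "6 + t^2 > 0"
    by (simp_all add: add_nonneg_pos add_pos_nonneg)
  ultimately show ?thesis
    by (simp add: frac_eq_eq)
qed

theorem proposition2p2:
  fixes n :: nat and x :: "nat \<Rightarrow> real"
  assumes "n \<ge> 4"
    and "(\<Sum>i=1..n. x i) = 0"
    and "(\<Sum>i=1..n. (x i)^2) = 1"
  shows "(\<Sum>i=1..n. x i * x (if i = 1 then n else i - 1))
           < (3 * real n ^ 2 - 4 * pi ^ 2) / (3 * real n ^ 2 + 2 * pi ^ 2)"
proof -
  define t where "t = 2 * pi / n"
  have n0: "n > 0" using assms(1) by simp
  have "0 < t" "t \<le> pi / 2"
    using assms(1) by (simp_all add: t_def field_simps)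
  moreover have "pi * pi < 4 * 4"
    using pi_less_4 by (intro mult_strict_mono) auto
  then have "(pi / 2)^2 < 6"
    by (simp add: power2_eq_square)
  ultimately have "t^2 < 6"
    by (meson le_less_trans power_mono less_imp_le)
  have "(\<Sum>i=1..n. x i * x (cyc_pred n i)) \<le> cos t"
    using cyclic_sum_le_cos[OF n0 assms(2)] assms(3) by (simp add: t_def)
  also have "\<dots> \<le> 1 - t^2 / 2 + t^4 / 24"
    using \<open>0 < t\<close> \<open>t \<le> pi / 2\<close> by (intro cos_le_taylor_4) simp
  also have "\<dots> < (6 - 2 * t^2) / (6 + t^2)"
    using \<open>0 < t\<close> \<open>t^2 < 6\<close> by (rule taylor_4_lt_rational)
  also have "\<dots> = (3 * real n ^ 2 - 4 * pi ^ 2) / (3 * real n ^ 2 + 2 * pi ^ 2)"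
    using n0 t_def by (rule bound_eq_rational[symmetric])
  finally show ?thesis
    by (simp add: cyc_pred_def)
qed

end
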